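(* Under Assumptions 1 and 2 below, the sequence $U_n$ defined by $U_n=U_{n-1}-\eta_nAU_{n-1}+\eta_n\xi_n$ satisfies $\mathbb{E}\|U_n\|_2^2\lesssim n^{-\alpha}(1+\|U_0\|_2^2+\|\Delta_0\|_2^2)$.
   Context: Setting: $\zeta_1,\zeta_2,\ldots$ i.i.d. from a distribution $\Pi$; $f(x,\zeta)$ a loss differentiable in $x\in\mathbb{R}^d$; $F(x)=\mathbb{E}_{\zeta\sim\Pi}f(x,\zeta)$ with minimizer $x^*$; SGD iterates $x_n=x_{n-1}-\eta_n\nabla f(x_{n-1},\zeta_n)$ with $\eta_n=\eta n^{-\alpha}$, $\eta>0$, $\alpha\in(0,1)$; $\Delta_n=x_n-x^*$; $\xi_n=\nabla F(x_{n-1})-\nabla f(x_{n-1},\zeta_n)$; $\mathcal{F}_n=\sigma(\zeta_1,\ldots,\zeta_n)$, $\mathbb{E}_n=\mathbb{E}(\cdot\mid\mathcal{F}_n)$; $S=\mathbb{E}[\nabla f(x^*,\zeta)\nabla f(x^*,\zeta)^T]$. Assumption 1: $F$ is continuously differentiable and $\mu$-strongly convex with $\mu>0$, $\nabla F$ is $L_F$-Lipschitz, and $A=\nabla^2F(x^* )$ exists. Assumption 2: (i) $\mathbb{E}_{n-1}\xi_n=0$; (ii) $\mathbb{E}_{n-1}\xi_n\xi_n^T=S+\Sigma(\Delta_{n-1})$ where for some $\kappa\in\{1,2\}$ and constant $\Sigma_2>0$, $\|\Sigma(\Delta)\|\le\Sigma_2(\|\Delta\|_2^\kappa+\|\Delta\|_2^2)$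 and $|\mathrm{tr}\,\Sigma(\Delta)|\le\Sigma_2(\|\Delta\|_2^\kappa+\|\Delta\|_2^2)$; (iii) $\mathbb{E}_{n-1}\|\xi_n\|_2^4\le\Sigma_4(1+\|\Delta_{n-1}\|_2^4)$. $\lesssim$ means inequality up to a constant independent of $n$. *)

theory Defs
  imports "HOL-Analysis.Analysis" "HOL-Probability.Probability"
begin

definition strongly_convex :: "real \<Rightarrow> ('a::real_inner \<Rightarrow> real) \<Rightarrow> bool" where
  "strongly_convex \<mu> F \<longleftrightarrow> convex_on UNIV (\<lambda>x. F x - (\<mu> / 2) * (norm x)\<^sup>2)"

definition outer :: "real^'n \<Rightarrow> real^'n^'n" where
  "outer v = (\<chi> i j. v $ i * v $ j)"

primrec sgd_x :: "(real^'n \<Rightarrow> 'z \<Rightarrow> real^'n) \<Rightarrow> real \<Rightarrow> real \<Rightarrow> real^'n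
    \<Rightarrow> (nat \<Rightarrow> 'w \<Rightarrow> 'z) \<Rightarrow> nat \<Rightarrow> 'w \<Rightarrow> real^'n" where
  "sgd_x gf \<eta> \<alpha> x0 \<zeta> 0 \<omega> = x0"
| "sgd_x gf \<eta> \<alpha> x0 \<zeta> (Suc n) \<omega> =
     sgd_x gf \<eta> \<alpha> x0 \<zeta> n \<omega>
     - (\<eta> * real (Suc n) powr (- \<alpha>)) *\<^sub>R gf (sgd_x gf \<eta> \<alpha> x0 \<zeta> n \<omega>) (\<zeta> (Suc n) \<omega>)"

definition sgd_xi :: "(real^'n \<Rightarrow> real^'n) \<Rightarrow> (real^'n \<Rightarrow> 'z \<Rightarrow> real^'n) \<Rightarrow> real \<Rightarrow> real
    \<Rightarrow> real^'n \<Rightarrow> (nat \<Rightarrow> 'w \<Rightarrow> 'z) \<Rightarrow> nat \<Rightarrow> 'w \<Rightarrow> real^'n" where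
  "sgd_xi gF gf \<eta> \<alpha> x0 \<zeta> n \<omega> =
     gF (sgd_x gf \<eta> \<alpha> x0 \<zeta> (n - 1) \<omega>) - gf (sgd_x gf \<eta> \<alpha> x0 \<zeta> (n - 1) \<omega>) (\<zeta> n \<omega>)"

primrec sgd_U :: "(real^'n \<Rightarrow> real^'n) \<Rightarrow> (real^'n \<Rightarrow> 'z \<Rightarrow> real^'n) \<Rightarrow> real^'n^'n
    \<Rightarrow> real \<Rightarrow> real \<Rightarrow> real^'n \<Rightarrow> real^'n \<Rightarrow> (nat \<Rightarrow> 'w \<Rightarrow> 'z) \<Rightarrow> nat \<Rightarrow> 'w \<Rightarrow> real^'n" where
  "sgd_U gF gf A \<eta> \<alpha> x0 u0 \<zeta> 0 \<omega> = u0"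
| "sgd_U gF gf A \<eta> \<alpha> x0 u0 \<zeta> (Suc n) \<omega> =
     sgd_U gF gf A \<eta> \<alpha> x0 u0 \<zeta> n \<omega>
     - (\<eta> * real (Suc n) powr (- \<alpha>)) *\<^sub>R (A *v sgd_U gF gf A \<eta> \<alpha> x0 u0 \<zeta> n \<omega>)
     + (\<eta> * real (Suc n) powr (- \<alpha>)) *\<^sub>R sgd_xi gF gf \<eta> \<alpha> x0 \<zeta> (Suc n) \<omega>"

end

theory Submission
  imports Defs
begin

text \<open>Both the error \<open>\<Delta>_n = x_n - x*\<close> and the linearised process \<open>U_n\<close> obey a
  mean-square recursion \<open>E|V_n|^2 \<le> (1 - 2 \<eta>_n \<mu> + \<eta>_n^2 a) E|V_(n-1)|^2 + \<eta>_n^2 b\<close>. It comes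
  from integrating out the fresh sample \<open>\<zeta>_n\<close>, which is independent of \<open>\<zeta>_1, ..., \<zeta>_(n-1)\<close>:
  the deterministic part of the step contracts by strong monotonicity (of \<open>\<nabla>F\<close> about \<open>x*\<close>,
  resp. of \<open>A\<close>), while the noise \<open>\<xi>_n\<close> is centred with conditional second moment
  \<open>O(1 + |\<Delta>_(n-1)|^2)\<close> by the fourth-moment bound. Any nonnegative sequence obeying such a
  recursion with \<open>\<eta>_n = \<eta> n^-\<alpha>\<close> is \<open>O(n^-\<alpha>) (V_0 + b)\<close>. Applied to \<open>\<Delta>_n\<close> this bounds
  \<open>E|\<Delta>_n|^2\<close> uniformly, which turns \<open>b\<close> into a constant in the recursion for \<open>U_n\<close>.\<close>

definition stepsize :: "real \<Rightarrow> real \<Rightarrow> nat \<Rightarrow> real" where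
  "stepsize \<eta> \<alpha> n = \<eta> * real n powr - \<alpha>"

lemma stepsize_pos: "0 < \<eta> \<Longrightarrow> 1 \<le> n \<Longrightarrow> 0 < stepsize \<eta> \<alpha> n"
  by (simp add: stepsize_def)

lemma stepsize_le: "0 < \<eta> \<Longrightarrow> 0 \<le> \<alpha> \<Longrightarrow> 1 \<le> n \<Longrightarrow> stepsize \<eta> \<alpha> n \<le> \<eta>"
  by (simp add: stepsize_def powr_minus inverse_le_1_iff ge_one_powr_ge_zero)

lemma stepsize_tendsto_zero: "0 < \<alpha> \<Longrightarrow> (\<lambda>n. stepsize \<eta> \<alpha> (Suc n)) \<longlonglongrightarrow> 0"
  unfolding stepsize_def
  by (intro tendsto_mult_right_zero filterlim_compose[OF tendsto_neg_powr filterlim_Suc]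
      filterlim_real_sequentially) simp

lemma contraction_factor_nonneg:
  fixes s \<mu> a :: real
  assumes "\<mu>\<^sup>2 \<le> a"
  shows "0 \<le> 1 - 2 * s * \<mu> + s\<^sup>2 * a"
proof -
  have "s\<^sup>2 * \<mu>\<^sup>2 \<le> s\<^sup>2 * a" using assms by (intro mult_left_mono) auto
  moreover have "0 \<le> (1 - s * \<mu>)\<^sup>2" by simp
  ultimately show ?thesis by (simp add: power2_eq_square algebra_simps)
qed

lemma powr_neg_diff_Suc_le:
  fixes \<alpha> :: real
  assumes "0 < \<alpha>" "\<alpha> < 1" "1 \<le> n"
  shows "real n powr - \<alpha> - real (Suc n) powr - \<alpha> \<le> real (Suc n) powr - \<alpha> / real n"
proof -
  have n: "0 < real n" using assms by simp
  have "real n powr (1 - \<alpha>) \<le> real (Suc n) powr (1 - \<alpha>)"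
    using assms by (intro powr_mono2) auto
  moreover have "real n powr (1 - \<alpha>) = real n powr - \<alpha> * real n"
    using n powr_add[of "real n" "- \<alpha>" 1] by simp
  moreover have "real (Suc n) powr (1 - \<alpha>) = real (Suc n) powr - \<alpha> * (real n + 1)"
    using powr_add[of "real (Suc n)" "- \<alpha>" 1] by simp
  ultimately have "(real n powr - \<alpha> - real (Suc n) powr - \<alpha>) * real n \<le> real (Suc n) powr - \<alpha>"
    by (simp add: algebra_simps)
  then show ?thesis using n by (simp add: pos_le_divide_eq)
qed

lemma powr_neg_le_twice_Suc:
  fixes \<alpha> :: real
  assumes "0 \<le> \<alpha>" "\<alpha> \<le> 1" "1 \<le> n"
  shows "real n powr - \<alpha> \<le> 2 * real (Suc n) powr - \<alpha>"
proof -
  have "(2 * real n) powr - \<alpha> \<le> real (Suc n) powr - \<alpha>"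
    using assms by (intro powr_mono2') auto
  moreover have "(2 * real n) powr - \<alpha> = 2 powr - \<alpha> * real n powr - \<alpha>"
    by (simp add: powr_mult)
  moreover have "1 / 2 \<le> 2 powr - \<alpha>"
    using powr_mono[of "- 1" "- \<alpha>" 2] assms by simp
  ultimately have "1 / 2 * real n powr - \<alpha> \<le> real (Suc n) powr - \<alpha>"
    by (smt (verit) mult_right_mono powr_ge_zero)
  then show ?thesis by simp
qed

lemma recursion_growth_bound:
  fixes u s :: "nat \<Rightarrow> real"
  assumes "0 \<le> \<mu>" "\<mu>\<^sup>2 \<le> a" "0 \<le> b" "\<And>k. 0 \<le> u k" "\<And>k. 0 \<le> s k" "\<And>k. s k \<le> \<eta>"
    and rec: "\<And>k. u (Suc k) \<le> (1 - 2 * s k * \<mu> + (s k)\<^sup>2 * a) * u k + (s k)\<^sup>2 * b"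
  shows "u k \<le> (1 + \<eta>\<^sup>2 * a + \<eta>\<^sup>2) ^ k * (u 0 + b)"
proof (induction k)
  case 0
  then show ?case using assms(3) by simp
next
  case (Suc k)
  define G where "G = 1 + \<eta>\<^sup>2 * a + \<eta>\<^sup>2"
  have a: "0 \<le> a" using assms(2) by (meson order_trans zero_le_power2)
  have s2: "(s k)\<^sup>2 \<le> \<eta>\<^sup>2" using assms(5,6) by (intro power_mono)
  have factor: "1 - 2 * s k * \<mu> + (s k)\<^sup>2 * a \<le> 1 + \<eta>\<^sup>2 * a"
    using mult_right_mono[OF s2 a] assms(1,5) by (smt (verit) mult_nonneg_nonneg)
  have Gk: "1 \<le> G ^ k" unfolding G_def using a by simp
  have b: "b \<le> G ^ k * (u 0 + b)"
    using assms(3,4) Gk by (smt (verit) mult_le_cancel_right1)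
  have "u (Suc k) \<le> (1 - 2 * s k * \<mu> + (s k)\<^sup>2 * a) * u k + (s k)\<^sup>2 * b" by (rule rec)
  also have "\<dots> \<le> (1 + \<eta>\<^sup>2 * a) * (G ^ k * (u 0 + b)) + \<eta>\<^sup>2 * (G ^ k * (u 0 + b))"
    using Suc.IH[folded G_def] factor b s2 a assms(1,3,4,5) contraction_factor_nonneg[OF assms(2)]
    by (intro add_mono mult_mono) (auto simp: add_nonneg_nonneg)
  also have "\<dots> = G ^ Suc k * (u 0 + b)" unfolding G_def by (simp add: algebra_simps)
  finally show ?case unfolding G_def .
qed

text \<open>Once \<open>m^(\<alpha>-1) \<le> \<eta>\<mu>/4\<close>, the contraction \<open>1 - \<eta>_(m+1) \<mu>\<close> beats the decay
  \<open>(m+1)^-\<alpha> / m^-\<alpha>\<close> of the target bound, so \<open>C m^-\<alpha>\<close> propagates.\<close>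

lemma stepsize_decay_step:
  assumes "0 < \<eta>" "0 < \<alpha>" "\<alpha> < 1" "0 < \<mu>" "1 \<le> m"
    and small: "real m powr (\<alpha> - 1) \<le> \<eta> * \<mu> / 4" and C: "2 * \<eta> / \<mu> \<le> C"
  shows "(1 - stepsize \<eta> \<alpha> (Suc m) * \<mu>) * (C * real m powr - \<alpha>) + (stepsize \<eta> \<alpha> (Suc m))\<^sup>2
    \<le> C * real (Suc m) powr - \<alpha>"
proof -
  define p where "p = real m powr - \<alpha>"
  define q where "q = real (Suc m) powr - \<alpha>"
  have q: "0 < q" "q \<le> p" unfolding p_def q_def using assms by (auto intro: powr_mono2')
  have C0: "0 \<le> C" using C assms by (smt (verit) divide_pos_pos)
  have inv_m: "1 / real m \<le> \<eta> * \<mu> / 2 * q"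
  proof -
    have "1 / real m = real m powr (\<alpha> - 1) * p"
      unfolding p_def using assms powr_add[of "real m" "\<alpha> - 1" "- \<alpha>"] by (simp add: powr_minus_divide)
    also have "\<dots> \<le> \<eta> * \<mu> / 4 * (2 * q)"
      using small powr_neg_le_twice_Suc[of \<alpha> m] assms unfolding p_def q_def
      by (intro mult_mono) auto
    finally show ?thesis by simp
  qed
  have "p \<le> q + q * (1 / real m)"
    using powr_neg_diff_Suc_le[of \<alpha> m] assms unfolding p_def q_def by simp
  also have "\<dots> \<le> q + q * (\<eta> * \<mu> / 2 * q)"
    using mult_left_mono[OF inv_m, of q] q by simp
  finally have "C * p \<le> C * (q + q * (\<eta> * \<mu> / 2 * q))"
    using C0 by (rule mult_left_mono)
  then have Cp_bound: "C * p \<le> C * q + C * \<eta> * \<mu> * q\<^sup>2 / 2"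
    by (simp add: power2_eq_square algebra_simps)
  have cross_term: "C * \<eta> * \<mu> * q\<^sup>2 \<le> C * \<eta> * \<mu> * q * p"
    using mult_left_mono[OF q(2), of "C * \<eta> * \<mu> * q"] q C0 assms
    by (simp add: power2_eq_square mult.assoc)
  have "\<eta> * \<eta> * q\<^sup>2 \<le> C * \<mu> / 2 * \<eta> * q\<^sup>2"
    using C assms by (intro mult_right_mono) (auto simp: field_simps)
  then have noise_term: "\<eta>\<^sup>2 * q\<^sup>2 \<le> C * \<eta> * \<mu> * q\<^sup>2 / 2"
    by (simp add: power2_eq_square algebra_simps)
  have "(1 - \<eta> * q * \<mu>) * (C * p) + (\<eta> * q)\<^sup>2 = C * p - C * \<eta> * \<mu> * q * p + \<eta>\<^sup>2 * q\<^sup>2"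
    by (simp add: power2_eq_square algebra_simps)
  then show ?thesis
    unfolding stepsize_def p_def[symmetric] q_def[symmetric] using Cp_bound cross_term noise_term by linarith
qed

lemma stepsize_recursion_propagates:
  fixes u :: "nat \<Rightarrow> real" and \<eta> \<alpha> :: real and m :: nat
  defines "e \<equiv> stepsize \<eta> \<alpha> (Suc m)"
  assumes params: "0 < \<eta>" "0 < \<alpha>" "\<alpha> < 1" "0 < \<mu>" and a: "\<mu>\<^sup>2 \<le> a" and m: "1 \<le> m"
    and small: "real m powr (\<alpha> - 1) \<le> \<eta> * \<mu> / 4" "e * a \<le> \<mu>"
    and C: "2 * \<eta> / \<mu> \<le> C" and X: "0 \<le> b" "b \<le> X"
    and rec: "u (Suc m) \<le> (1 - 2 * e * \<mu> + e\<^sup>2 * a) * u m + e\<^sup>2 * b"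
    and bound: "u m \<le> C * real m powr - \<alpha> * X"
  shows "u (Suc m) \<le> C * real (Suc m) powr - \<alpha> * X"
proof -
  have e: "0 < e" unfolding e_def using params(1) m by (intro stepsize_pos) auto
  have C0: "0 \<le> C" using C params(1,4) by (smt (verit) divide_pos_pos)
  have factor: "1 - 2 * e * \<mu> + e\<^sup>2 * a \<le> 1 - e * \<mu>"
    using mult_left_mono[OF small(2), of e] e by (simp add: power2_eq_square algebra_simps)
  have "(1 - 2 * e * \<mu> + e\<^sup>2 * a) * u m \<le> (1 - 2 * e * \<mu> + e\<^sup>2 * a) * (C * real m powr - \<alpha> * X)"
    by (rule mult_left_mono[OF bound contraction_factor_nonneg[OF a]])
  also have "\<dots> \<le> (1 - e * \<mu>) * (C * real m powr - \<alpha> * X)"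
    using C0 X by (intro mult_right_mono[OF factor]) simp
  finally have "(1 - 2 * e * \<mu> + e\<^sup>2 * a) * u m \<le> (1 - e * \<mu>) * (C * real m powr - \<alpha> * X)" .
  moreover have "e\<^sup>2 * b \<le> e\<^sup>2 * X" using X by (simp add: mult_left_mono)
  moreover have decay: "(1 - e * \<mu>) * (C * real m powr - \<alpha>) + e\<^sup>2 \<le> C * real (Suc m) powr - \<alpha>"
    unfolding e_def using params m small(1) C by (rule stepsize_decay_step)
  ultimately have "u (Suc m) \<le> ((1 - e * \<mu>) * (C * real m powr - \<alpha>) + e\<^sup>2) * X"
    using rec by (simp add: algebra_simps)
  also have "\<dots> \<le> C * real (Suc m) powr - \<alpha> * X"
    using X by (intro mult_right_mono decay) simp
  finally show ?thesis .
qed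

lemma eventually_stepsize_small:
  assumes "0 < \<alpha>" "\<alpha> < 1" "0 < c" "0 < d"
  shows "\<forall>\<^sub>F m in sequentially. real m powr (\<alpha> - 1) \<le> c \<and> stepsize \<eta> \<alpha> (Suc m) \<le> d"
proof -
  have "(\<lambda>m. real m powr (\<alpha> - 1)) \<longlonglongrightarrow> 0"
    using assms by (intro tendsto_neg_powr filterlim_real_sequentially) auto
  then have "\<forall>\<^sub>F m in sequentially. real m powr (\<alpha> - 1) < c"
    using assms(3) by (rule order_tendstoD(2))
  moreover have "\<forall>\<^sub>F m in sequentially. stepsize \<eta> \<alpha> (Suc m) < d"
    using stepsize_tendsto_zero[OF assms(1)] assms(4) by (rule order_tendstoD(2))
  ultimately show ?thesis by eventually_elim auto
qed

lemma stepsize_recursion_rate: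
  assumes "0 < \<eta>" "0 < \<alpha>" "\<alpha> < 1" "0 < \<mu>" "\<mu>\<^sup>2 \<le> a"
  obtains C where "0 \<le> C"
    and "\<And>u b n. 0 \<le> b \<Longrightarrow> (\<And>k. 0 \<le> u k) \<Longrightarrow>
      (\<And>k. u (Suc k) \<le> (1 - 2 * stepsize \<eta> \<alpha> (Suc k) * \<mu> + (stepsize \<eta> \<alpha> (Suc k))\<^sup>2 * a) * u k
                 + (stepsize \<eta> \<alpha> (Suc k))\<^sup>2 * b) \<Longrightarrow>
      1 \<le> n \<Longrightarrow> u n \<le> C * real n powr - \<alpha> * (u 0 + b)"
proof -
  have a: "0 < a" using assms(4,5) by (smt (verit) zero_less_power)
  obtain N where N: "1 \<le> N"
    and small: "\<And>m. N \<le> m \<Longrightarrow> real m powr (\<alpha> - 1) \<le> \<eta> * \<mu> / 4 \<and> stepsize \<eta> \<alpha> (Suc m) \<le> \<mu> / a"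
    using eventually_conj[OF eventually_stepsize_small[of \<alpha> "\<eta> * \<mu> / 4" "\<mu> / a" \<eta>] eventually_ge_at_top[of 1]]
      assms a unfolding eventually_sequentially by auto
  define G where "G = 1 + \<eta>\<^sup>2 * a + \<eta>\<^sup>2"
  define C where "C = max (G ^ N * real N powr \<alpha>) (2 * \<eta> / \<mu>)"
  have C0: "0 \<le> C" unfolding C_def using assms by (simp add: le_max_iff_disj)
  show ?thesis
  proof (rule that[OF C0])
    fix u :: "nat \<Rightarrow> real" and b and n :: nat
    assume b: "0 \<le> b" and u: "\<And>k. 0 \<le> u k" and n: "1 \<le> n"
      and rec: "\<And>k. u (Suc k) \<le> (1 - 2 * stepsize \<eta> \<alpha> (Suc k) * \<mu> + (stepsize \<eta> \<alpha> (Suc k))\<^sup>2 * a) * u k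
                 + (stepsize \<eta> \<alpha> (Suc k))\<^sup>2 * b"
    define X where "X = u 0 + b"
    have X: "0 \<le> X" "b \<le> X" unfolding X_def using u b by auto
    have growth: "u k \<le> G ^ k * X" for k
      unfolding G_def X_def using assms(2,4) stepsize_pos[OF assms(1)] stepsize_le[OF assms(1)]
      by (intro recursion_growth_bound[where s = "\<lambda>k. stepsize \<eta> \<alpha> (Suc k)", OF _ assms(5) b u _ _ rec])
        (auto intro: less_imp_le)
    have early: "u k \<le> C * real k powr - \<alpha> * X" if "1 \<le> k" "k \<le> N" for k
    proof -
      have "G ^ k \<le> G ^ N" unfolding G_def using that a by (intro power_increasing) auto
      then have "u k \<le> G ^ N * X" using growth[of k] X by (meson mult_right_mono order_trans)
      also have "\<dots> = (G ^ N * real N powr \<alpha>) * real N powr - \<alpha> * X"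
        using N by (simp add: powr_minus)
      also have "\<dots> \<le> C * real k powr - \<alpha> * X"
        using that X C0 assms by (intro mult_right_mono mult_mono powr_mono2') (auto simp: C_def)
      finally show ?thesis .
    qed
    have late: "u m \<le> C * real m powr - \<alpha> * X" if "N \<le> m" for m
      using that
    proof (induction m rule: dec_induct)
      case base
      then show ?case using early N by simp
    next
      case (step m)
      then show ?case
        using N small[OF step(1)] stepsize_pos[OF assms(1), of "Suc m" \<alpha>] a b X rec[of m]
        by (intro stepsize_recursion_propagates[OF assms]) (auto simp: C_def pos_le_divide_eq mult.commute)
    qed
    show "u n \<le> C * real n powr - \<alpha> * (u 0 + b)"
      using early[OF n] late[of n] unfolding X_def by (cases "N \<le> n") simp_all
  qed
qed

lemma DERIV_ge_of_right_increments:
  fixes g :: "real \<Rightarrow> real"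
  assumes "(g has_real_derivative D) (at 0)" and "\<And>t. 0 < t \<Longrightarrow> t < 1 \<Longrightarrow> c * t \<le> g t - g 0"
  shows "c \<le> D"
proof (rule tendsto_lowerbound)
  have "((\<lambda>h. (g h - g 0) / h) \<longlongrightarrow> D) (at 0)"
    using assms(1) unfolding DERIV_def by simp
  then show "((\<lambda>h. (g h - g 0) / h) \<longlongrightarrow> D) (at_right 0)"
    using filterlim_at_split by blast
  show "\<forall>\<^sub>F h in at_right 0. c \<le> (g h - g 0) / h"
    unfolding eventually_at_right_field
    using assms(2) by (intro exI[of _ 1]) (auto simp: pos_le_divide_eq)
qed simp

lemma GDERIV_along_line:
  fixes f :: "'a::real_inner \<Rightarrow> real"
  assumes "GDERIV f x :> d"
  shows "((\<lambda>t. f (x + t *\<^sub>R v)) has_real_derivative inner v d) (at 0)"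
proof -
  have "((\<lambda>t::real. x + t *\<^sub>R v) has_derivative (\<lambda>t. t *\<^sub>R v)) (at 0)"
    by (auto intro!: derivative_eq_intros)
  moreover have "(f has_derivative (\<lambda>h. inner h d)) (at ((\<lambda>t::real. x + t *\<^sub>R v) 0))"
    using assms by (simp add: gderiv_def)
  ultimately have "((\<lambda>t. f (x + t *\<^sub>R v)) has_derivative (\<lambda>t. inner (t *\<^sub>R v) d)) (at 0)"
    by (rule has_derivative_compose)
  then show ?thesis unfolding has_field_derivative_def
    by (rule has_derivative_eq_rhs) (auto simp: fun_eq_iff)
qed

lemma convex_on_above_GDERIV_tangent:
  fixes G :: "'a::real_inner \<Rightarrow> real"
  assumes "convex_on UNIV G" and "GDERIV G x :> d"
  shows "G x + inner (y - x) d \<le> G y"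
proof -
  have "- (G y - G x) \<le> - inner (y - x) d"
  proof (rule DERIV_ge_of_right_increments)
    show "((\<lambda>t. - G (x + t *\<^sub>R (y - x))) has_real_derivative - inner (y - x) d) (at 0)"
      by (intro DERIV_minus GDERIV_along_line assms(2))
    fix t :: real assume t: "0 < t" "t < 1"
    have "G ((1 - t) *\<^sub>R x + t *\<^sub>R y) \<le> (1 - t) * G x + t * G y"
      using convex_onD[OF assms(1)] t by auto
    moreover have "x + t *\<^sub>R (y - x) = (1 - t) *\<^sub>R x + t *\<^sub>R y" by (simp add: algebra_simps)
    ultimately show "- (G y - G x) * t \<le> - G (x + t *\<^sub>R (y - x)) - - G (x + 0 *\<^sub>R (y - x))"
      by (simp add: algebra_simps)
  qed
  then show ?thesis by simp
qed

lemma GDERIV_power2_norm: "GDERIV (\<lambda>x::'a::real_inner. c * (norm x)\<^sup>2) x :> (2 * c) *\<^sub>R x"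
proof -
  have "((\<lambda>x::'a. c * inner x x) has_derivative (\<lambda>h. c * (inner x h + inner h x))) (at x)"
    by (intro has_derivative_mult_right has_derivative_inner[OF has_derivative_ident has_derivative_ident,
          simplified])
  then show ?thesis unfolding gderiv_def power2_norm_eq_inner
    by (rule has_derivative_eq_rhs) (auto simp: fun_eq_iff inner_commute algebra_simps)
qed

lemma strongly_convex_gradient_monotone:
  fixes F :: "'a::real_inner \<Rightarrow> real"
  assumes "strongly_convex \<mu> F" and "\<And>x. GDERIV F x :> gF x"
  shows "\<mu> * (norm (y - x))\<^sup>2 \<le> inner (y - x) (gF y - gF x)"
proof -
  define G where "G x = F x - (\<mu> / 2) * (norm x)\<^sup>2" for x
  have convex: "convex_on UNIV G" using assms(1) unfolding strongly_convex_def G_def by simp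
  have grad: "GDERIV G z :> gF z - \<mu> *\<^sub>R z" for z
    unfolding G_def using GDERIV_diff[OF assms(2) GDERIV_power2_norm[of "\<mu> / 2"]] by simp
  have "G x + inner (y - x) (gF x - \<mu> *\<^sub>R x) \<le> G y"
    and "G y + inner (x - y) (gF y - \<mu> *\<^sub>R y) \<le> G x"
    by (rule convex_on_above_GDERIV_tangent[OF convex grad])+
  then have "0 \<le> inner (y - x) (gF y - \<mu> *\<^sub>R y) - inner (y - x) (gF x - \<mu> *\<^sub>R x)"
    by (smt (verit) inner_minus_left minus_diff_eq)
  also have "\<dots> = inner (y - x) (gF y - gF x) - \<mu> * inner (y - x) (y - x)"
    by (simp add: inner_diff_right algebra_simps)
  finally show ?thesis by (simp add: power2_norm_eq_inner)
qed

lemma GDERIV_zero_at_min: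
  fixes F :: "'a::real_inner \<Rightarrow> real"
  assumes "GDERIV F x :> d" and "\<And>y. F x \<le> F y"
  shows "d = 0"
proof -
  have "(\<lambda>h. inner h d) = (\<lambda>h. 0)"
    using assms unfolding gderiv_def by (intro has_derivative_local_min) auto
  then have "inner d d = 0" by meson
  then show ?thesis by simp
qed

lemma derivative_coercive_of_strongly_monotone:
  fixes gF :: "'a::real_inner \<Rightarrow> 'a"
  assumes mono: "\<And>y. \<mu> * (norm (y - x))\<^sup>2 \<le> inner (y - x) (gF y - gF x)"
    and deriv: "(gF has_derivative D) (at x)"
  shows "\<mu> * (norm v)\<^sup>2 \<le> inner v (D v)"
proof (rule DERIV_ge_of_right_increments)
  have "((\<lambda>t::real. x + t *\<^sub>R v) has_derivative (\<lambda>t. t *\<^sub>R v)) (at 0)"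
    by (auto intro!: derivative_eq_intros)
  moreover have "(gF has_derivative D) (at ((\<lambda>t::real. x + t *\<^sub>R v) 0))"
    using deriv by simp
  ultimately have "((\<lambda>t. gF (x + t *\<^sub>R v)) has_derivative (\<lambda>t. D (t *\<^sub>R v))) (at 0)"
    by (rule has_derivative_compose)
  then have "((\<lambda>t. inner v (gF (x + t *\<^sub>R v))) has_derivative (\<lambda>t. inner v (D (t *\<^sub>R v)))) (at 0)"
    by (intro derivative_eq_intros) auto
  then show "((\<lambda>t. inner v (gF (x + t *\<^sub>R v))) has_real_derivative inner v (D v)) (at 0)"
    unfolding has_field_derivative_def using has_derivative_linear[OF deriv]
    by (rule_tac has_derivative_eq_rhs) (auto simp: fun_eq_iff linear_scale)
  fix t :: real assume t: "0 < t" "t < 1"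
  have "t * (\<mu> * (norm v)\<^sup>2 * t) = \<mu> * (norm (t *\<^sub>R v))\<^sup>2"
    using t by (simp add: power_mult_distrib power2_eq_square)
  also have "\<dots> \<le> inner (t *\<^sub>R v) (gF (x + t *\<^sub>R v) - gF x)"
    using mono[of "x + t *\<^sub>R v"] by simp
  also have "\<dots> = t * (inner v (gF (x + t *\<^sub>R v)) - inner v (gF (x + 0 *\<^sub>R v)))"
    by (simp add: inner_diff_right right_diff_distrib)
  finally show "\<mu> * (norm v)\<^sup>2 * t \<le> inner v (gF (x + t *\<^sub>R v)) - inner v (gF (x + 0 *\<^sub>R v))"
    using t by simp
qed

lemma norm_diff_scaleR_power2_le:
  fixes v w :: "'a::real_inner"
  assumes "\<mu> * (norm v)\<^sup>2 \<le> inner v w" and "norm w \<le> L * norm v" and "0 \<le> s"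
  shows "(norm (v - s *\<^sub>R w))\<^sup>2 \<le> (1 - 2 * s * \<mu> + s\<^sup>2 * L\<^sup>2) * (norm v)\<^sup>2"
proof -
  have "(norm w)\<^sup>2 \<le> L\<^sup>2 * (norm v)\<^sup>2"
    using assms(2) by (metis norm_ge_zero power_mono power_mult_distrib)
  then have "s\<^sup>2 * (norm w)\<^sup>2 \<le> s\<^sup>2 * (L\<^sup>2 * (norm v)\<^sup>2)" by (simp add: mult_left_mono)
  moreover have "2 * s * (\<mu> * (norm v)\<^sup>2) \<le> 2 * s * inner v w"
    using assms(1,3) by (simp add: mult_left_mono)
  moreover have "(norm (v - s *\<^sub>R w))\<^sup>2 = (norm v)\<^sup>2 - 2 * s * inner v w + s\<^sup>2 * (norm w)\<^sup>2"
    unfolding power2_norm_eq_inner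
    by (simp add: inner_diff_left inner_diff_right inner_commute power2_eq_square algebra_simps)
  ultimately show ?thesis by (simp add: algebra_simps)
qed

lemma (in prob_space) second_moment_le_of_fourth_moment:
  fixes \<xi> :: "'a \<Rightarrow> 'b::real_normed_vector"
  assumes \<xi>: "\<xi> \<in> borel_measurable M" and fourth: "(\<integral>\<^sup>+ z. ennreal (norm (\<xi> z) ^ 4) \<partial>M) \<le> ennreal (s * t\<^sup>2)"
    and "0 < t" "0 \<le> s"
  shows "integrable M (\<lambda>z. (norm (\<xi> z))\<^sup>2)" and "expectation (\<lambda>z. (norm (\<xi> z))\<^sup>2) \<le> (1 + s) / 2 * t"
proof -
  have int4: "integrable M (\<lambda>z. norm (\<xi> z) ^ 4)"
    using \<xi> fourth by (intro integrableI_bounded) (auto simp: top.not_eq_extremum intro: le_less_trans)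
  have "ennreal (expectation (\<lambda>z. norm (\<xi> z) ^ 4)) \<le> ennreal (s * t\<^sup>2)"
    using fourth nn_integral_eq_integral[OF int4] by simp
  then have E4: "expectation (\<lambda>z. norm (\<xi> z) ^ 4) \<le> s * t\<^sup>2"
    using assms(4) by (simp add: ennreal_le_iff)
  have amgm: "(norm (\<xi> z))\<^sup>2 \<le> t / 2 + norm (\<xi> z) ^ 4 / (2 * t)" for z
  proof -
    have "2 * t * (norm (\<xi> z))\<^sup>2 \<le> t\<^sup>2 + norm (\<xi> z) ^ 4"
      using sum_squares_ge_zero[of 0 "t - (norm (\<xi> z))\<^sup>2"]
      by (simp add: power2_eq_square power4_eq_xxxx algebra_simps)
    then show ?thesis using assms(3) by (simp add: field_simps power2_eq_square)
  qed
  have bound: "integrable M (\<lambda>z. t / 2 + norm (\<xi> z) ^ 4 / (2 * t))" using int4 by simp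
  show int2: "integrable M (\<lambda>z. (norm (\<xi> z))\<^sup>2)"
    by (rule Bochner_Integration.integrable_bound[OF bound])
      (use \<xi> amgm assms(3) in \<open>auto intro!: AE_I2\<close>)
  have "expectation (\<lambda>z. (norm (\<xi> z))\<^sup>2) \<le> expectation (\<lambda>z. t / 2 + norm (\<xi> z) ^ 4 / (2 * t))"
    by (rule integral_mono[OF int2 bound amgm])
  also have "\<dots> = t / 2 + expectation (\<lambda>z. norm (\<xi> z) ^ 4) / (2 * t)"
    using int4 by (simp add: prob_space)
  also have "\<dots> \<le> t / 2 + s * t\<^sup>2 / (2 * t)"
    using E4 assms(3) by (simp add: divide_right_mono)
  also have "\<dots> = (1 + s) / 2 * t"
    using assms(3) by (simp add: power2_eq_square field_simps)
  finally show "expectation (\<lambda>z. (norm (\<xi> z))\<^sup>2) \<le> (1 + s) / 2 * t" .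
qed

lemma (in prob_space) nn_integral_norm_add_centered:
  fixes \<xi> :: "'a \<Rightarrow> 'b::euclidean_space"
  assumes "integrable M \<xi>" "expectation \<xi> = 0" "integrable M (\<lambda>z. (norm (\<xi> z))\<^sup>2)"
  shows "(\<integral>\<^sup>+ z. ennreal ((norm (w + c *\<^sub>R \<xi> z))\<^sup>2) \<partial>M)
    = ennreal ((norm w)\<^sup>2 + c\<^sup>2 * expectation (\<lambda>z. (norm (\<xi> z))\<^sup>2))"
proof -
  have expand: "(norm (w + c *\<^sub>R \<xi> z))\<^sup>2 = (norm w)\<^sup>2 + 2 * c * inner w (\<xi> z) + c\<^sup>2 * (norm (\<xi> z))\<^sup>2" for z
    unfolding power2_norm_eq_inner
    by (simp add: inner_add_left inner_add_right inner_commute power2_eq_square algebra_simps)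
  have "(\<integral>\<^sup>+ z. ennreal ((norm (w + c *\<^sub>R \<xi> z))\<^sup>2) \<partial>M) = ennreal (expectation (\<lambda>z. (norm (w + c *\<^sub>R \<xi> z))\<^sup>2))"
  proof (rule nn_integral_eq_integral)
    show "integrable M (\<lambda>z. (norm (w + c *\<^sub>R \<xi> z))\<^sup>2)" unfolding expand using assms by simp
  qed simp
  also have "expectation (\<lambda>z. (norm (w + c *\<^sub>R \<xi> z))\<^sup>2) = (norm w)\<^sup>2 + c\<^sup>2 * expectation (\<lambda>z. (norm (\<xi> z))\<^sup>2)"
    using assms by (simp add: expand prob_space)
  finally show ?thesis .
qed

lemma (in prob_space) nn_integral_indep_var:
  assumes indep: "indep_var N1 X N2 Y" and h: "h \<in> borel_measurable (N1 \<Otimes>\<^sub>M N2)"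
  shows "(\<integral>\<^sup>+ \<omega>. h (X \<omega>, Y \<omega>) \<partial>M) = (\<integral>\<^sup>+ \<omega>. \<integral>\<^sup>+ \<omega>'. h (X \<omega>, Y \<omega>') \<partial>M \<partial>M)"
proof -
  have X: "X \<in> measurable M N1" and Y: "Y \<in> measurable M N2"
    and prod: "distr M N1 X \<Otimes>\<^sub>M distr M N2 Y = distr M (N1 \<Otimes>\<^sub>M N2) (\<lambda>\<omega>. (X \<omega>, Y \<omega>))"
    using indep unfolding indep_var_distribution_eq by auto
  interpret Y: prob_space "distr M N2 Y" by (rule prob_space_distr[OF Y])
  have "sets (distr M N1 X \<Otimes>\<^sub>M distr M N2 Y) = sets (N1 \<Otimes>\<^sub>M N2)"
    by (rule sets_pair_measure_cong) simp_all
  from h measurable_cong_sets[OF this refl]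
  have h': "h \<in> borel_measurable (distr M N1 X \<Otimes>\<^sub>M distr M N2 Y)" by blast
  have "sets (N1 \<Otimes>\<^sub>M distr M N2 Y) = sets (N1 \<Otimes>\<^sub>M N2)"
    by (rule sets_pair_measure_cong) simp_all
  from h measurable_cong_sets[OF this refl]
  have h'': "h \<in> borel_measurable (N1 \<Otimes>\<^sub>M distr M N2 Y)" by blast
  have inner: "(\<integral>\<^sup>+ y. h (X \<omega>, y) \<partial>distr M N2 Y) = (\<integral>\<^sup>+ \<omega>'. h (X \<omega>, Y \<omega>') \<partial>M)"
    if "\<omega> \<in> space M" for \<omega>
    using measurable_compose_Pair1[OF measurable_space[OF X that] h] by (intro nn_integral_distr[OF Y]) simp
  have "(\<integral>\<^sup>+ \<omega>. h (X \<omega>, Y \<omega>) \<partial>M) = (\<integral>\<^sup>+ p. h p \<partial>(distr M N1 X \<Otimes>\<^sub>M distr M N2 Y))"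
    unfolding prod using h by (intro nn_integral_distr[OF measurable_Pair[OF X Y], symmetric]) simp
  also have "\<dots> = (\<integral>\<^sup>+ x. \<integral>\<^sup>+ y. h (x, y) \<partial>distr M N2 Y \<partial>distr M N1 X)"
    by (rule Y.nn_integral_fst[symmetric, OF h'])
  also have "\<dots> = (\<integral>\<^sup>+ \<omega>. \<integral>\<^sup>+ y. h (X \<omega>, y) \<partial>distr M N2 Y \<partial>M)"
    using Y.borel_measurable_nn_integral_fst[OF h''] by (intro nn_integral_distr[OF X]) simp
  also have "\<dots> = (\<integral>\<^sup>+ \<omega>. \<integral>\<^sup>+ \<omega>'. h (X \<omega>, Y \<omega>') \<partial>M \<partial>M)"
    using inner by (rule nn_integral_cong)
  finally show ?thesis .
qed

lemma (in prob_space) nn_integral_lincomb: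
  assumes "f \<in> borel_measurable M" "g \<in> borel_measurable M" "\<And>\<omega>. 0 \<le> f \<omega>" "\<And>\<omega>. 0 \<le> g \<omega>"
    and "0 \<le> a" "0 \<le> b" "0 \<le> c"
  shows "(\<integral>\<^sup>+ \<omega>. ennreal (a * f \<omega> + b * g \<omega> + c) \<partial>M)
    = ennreal a * (\<integral>\<^sup>+ \<omega>. ennreal (f \<omega>) \<partial>M) + ennreal b * (\<integral>\<^sup>+ \<omega>. ennreal (g \<omega>) \<partial>M) + ennreal c"
proof -
  have "(\<integral>\<^sup>+ \<omega>. ennreal (a * f \<omega> + b * g \<omega> + c) \<partial>M)
      = (\<integral>\<^sup>+ \<omega>. ennreal a * ennreal (f \<omega>) + ennreal b * ennreal (g \<omega>) + ennreal c \<partial>M)"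
    using assms by (intro nn_integral_cong) (simp add: ennreal_plus[symmetric] ennreal_mult)
  also have "\<dots> = ennreal a * (\<integral>\<^sup>+ \<omega>. ennreal (f \<omega>) \<partial>M) + ennreal b * (\<integral>\<^sup>+ \<omega>. ennreal (g \<omega>) \<partial>M) + ennreal c"
    using assms(1,2) by (simp add: nn_integral_add nn_integral_cmult emeasure_space_1)
  finally show ?thesis .
qed

lemma enn2real_recursion:
  fixes E :: "nat \<Rightarrow> ennreal"
  assumes "E 0 < \<top>" and rec: "\<And>k. E (Suc k) \<le> ennreal (a k) * E k + ennreal (b k)"
    and "\<And>k. 0 \<le> a k" "\<And>k. 0 \<le> b k"
  shows "E k = ennreal (enn2real (E k))"
    and "enn2real (E (Suc k)) \<le> a k * enn2real (E k) + b k"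
proof -
  have finite: "E k < \<top>" for k
  proof (induction k)
    case (Suc k)
    then show ?case using rec[of k] by (simp add: ennreal_mult_less_top order.strict_trans1)
  qed (fact assms(1))
  then show "E k = ennreal (enn2real (E k))" for k by (simp add: less_top)
  then have "ennreal (enn2real (E (Suc k))) \<le> ennreal (a k * enn2real (E k) + b k)"
    using rec[of k] assms(3,4) by (metis ennreal_mult ennreal_plus enn2real_nonneg mult_nonneg_nonneg)
  then show "enn2real (E (Suc k)) \<le> a k * enn2real (E k) + b k"
    using assms(3,4) by (subst (asm) ennreal_le_iff) (auto intro!: add_nonneg_nonneg)
qed

lemma ennreal_stepsize_recursion_rate:
  assumes "0 < \<eta>" "0 < \<alpha>" "\<alpha> < 1" "0 < \<mu>" "\<mu>\<^sup>2 \<le> a"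
  obtains C where "0 \<le> C"
    and "\<And>E v b n. 0 \<le> v \<Longrightarrow> 0 \<le> b \<Longrightarrow> E 0 = ennreal v \<Longrightarrow>
      (\<And>k. E (Suc k) \<le> ennreal (1 - 2 * stepsize \<eta> \<alpha> (Suc k) * \<mu> + (stepsize \<eta> \<alpha> (Suc k))\<^sup>2 * a) * E k
                 + ennreal ((stepsize \<eta> \<alpha> (Suc k))\<^sup>2 * b)) \<Longrightarrow>
      1 \<le> n \<Longrightarrow> E n \<le> ennreal (C * real n powr - \<alpha> * (v + b))"
proof -
  obtain C where C: "0 \<le> C"
    and rate: "\<And>u b n. 0 \<le> b \<Longrightarrow> (\<And>k. 0 \<le> u k) \<Longrightarrow>
      (\<And>k. u (Suc k) \<le> (1 - 2 * stepsize \<eta> \<alpha> (Suc k) * \<mu> + (stepsize \<eta> \<alpha> (Suc k))\<^sup>2 * a) * u k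
                 + (stepsize \<eta> \<alpha> (Suc k))\<^sup>2 * b) \<Longrightarrow>
      1 \<le> n \<Longrightarrow> u n \<le> C * real n powr - \<alpha> * (u 0 + b)"
    using stepsize_recursion_rate[OF assms] by blast
  show ?thesis
  proof (rule that[OF C])
    fix E :: "nat \<Rightarrow> ennreal" and v b :: real and n :: nat
    assume v: "0 \<le> v" and b: "0 \<le> b" and E0: "E 0 = ennreal v" and n: "1 \<le> n"
      and rec: "\<And>k. E (Suc k) \<le> ennreal (1 - 2 * stepsize \<eta> \<alpha> (Suc k) * \<mu> + (stepsize \<eta> \<alpha> (Suc k))\<^sup>2 * a) * E k
                 + ennreal ((stepsize \<eta> \<alpha> (Suc k))\<^sup>2 * b)"
    note real = enn2real_recursion[of E, OF _ rec]
    have "E k = ennreal (enn2real (E k))"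
      and "enn2real (E (Suc k)) \<le> (1 - 2 * stepsize \<eta> \<alpha> (Suc k) * \<mu> + (stepsize \<eta> \<alpha> (Suc k))\<^sup>2 * a)
        * enn2real (E k) + (stepsize \<eta> \<alpha> (Suc k))\<^sup>2 * b" for k
      using real[of k] E0 b assms(5) by (auto intro: contraction_factor_nonneg)
    moreover from this(2) have "enn2real (E n) \<le> C * real n powr - \<alpha> * (enn2real (E 0) + b)"
      using b n by (intro rate) auto
    ultimately show "E n \<le> ennreal (C * real n powr - \<alpha> * (v + b))"
      using E0 v by (metis ennreal_leI enn2real_ennreal)
  qed
qed

lemma sgd_x_cong:
  "(\<And>j. j \<in> {1..k} \<Longrightarrow> \<zeta> j \<omega> = \<zeta>' j \<omega>') \<Longrightarrow> sgd_x gf \<eta> \<alpha> x0 \<zeta> k \<omega> = sgd_x gf \<eta> \<alpha> x0 \<zeta>' k \<omega>'"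
  by (induction k) auto

lemma sgd_U_cong:
  "(\<And>j. j \<in> {1..k} \<Longrightarrow> \<zeta> j \<omega> = \<zeta>' j \<omega>') \<Longrightarrow>
    sgd_U gF gf A \<eta> \<alpha> x0 u0 \<zeta> k \<omega> = sgd_U gF gf A \<eta> \<alpha> x0 u0 \<zeta>' k \<omega>'"
proof (induction k)
  case (Suc k)
  then have "sgd_x gf \<eta> \<alpha> x0 \<zeta> k \<omega> = sgd_x gf \<eta> \<alpha> x0 \<zeta>' k \<omega>'"
    by (intro sgd_x_cong) auto
  with Suc show ?case by (auto simp: sgd_xi_def)
qed simp

text \<open>Run on the canonical sample sequence \<open>\<lambda>j h. h j\<close>, the recursions express the iterates
  as functions of the finite sample history \<open>h = (\<zeta>_1, ..., \<zeta>_m)\<close>.\<close>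

lemma measurable_sgd_x_history:
  assumes gf: "(\<lambda>(x, z). gf x z) \<in> borel_measurable (borel \<Otimes>\<^sub>M P)"
  shows "k \<le> m \<Longrightarrow> (\<lambda>h. sgd_x gf \<eta> \<alpha> x0 (\<lambda>j h. h j) k h) \<in> borel_measurable (\<Pi>\<^sub>M j\<in>{1..<Suc m}. P)"
proof (induction k)
  case 0
  have "sgd_x gf \<eta> \<alpha> x0 (\<lambda>j h. h j) 0 = (\<lambda>_. x0)" by (simp add: fun_eq_iff)
  then show ?case by simp
next
  case (Suc k)
  then have "(\<lambda>h. (sgd_x gf \<eta> \<alpha> x0 (\<lambda>j h. h j) k h, h (Suc k))) \<in> measurable (\<Pi>\<^sub>M j\<in>{1..<Suc m}. P) (borel \<Otimes>\<^sub>M P)"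
    by (intro measurable_Pair measurable_component_singleton) auto
  from measurable_compose[OF this gf] Suc show ?case by simp
qed

lemma measurable_sgd_U_history:
  assumes gf: "(\<lambda>(x, z). gf x z) \<in> borel_measurable (borel \<Otimes>\<^sub>M P)" and gF: "continuous_on UNIV gF"
  shows "k \<le> m \<Longrightarrow> (\<lambda>h. sgd_U gF gf A \<eta> \<alpha> x0 u0 (\<lambda>j h. h j) k h) \<in> borel_measurable (\<Pi>\<^sub>M j\<in>{1..<Suc m}. P)"
proof (induction k)
  case 0
  have "sgd_U gF gf A \<eta> \<alpha> x0 u0 (\<lambda>j h. h j) 0 = (\<lambda>_. u0)" by (simp add: fun_eq_iff)
  then show ?case by simp
next
  case (Suc k)
  let ?x = "\<lambda>h. sgd_x gf \<eta> \<alpha> x0 (\<lambda>j h. h j) k h"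
  have "(\<lambda>h. (?x h, h (Suc k))) \<in> measurable (\<Pi>\<^sub>M j\<in>{1..<Suc m}. P) (borel \<Otimes>\<^sub>M P)"
    using Suc.prems by (intro measurable_Pair measurable_component_singleton measurable_sgd_x_history[OF gf]) auto
  from measurable_compose[OF this gf]
  have "(\<lambda>h. gf (?x h) (h (Suc k))) \<in> borel_measurable (\<Pi>\<^sub>M j\<in>{1..<Suc m}. P)" by simp
  moreover have "(\<lambda>h. gF (?x h)) \<in> borel_measurable (\<Pi>\<^sub>M j\<in>{1..<Suc m}. P)"
    using Suc.prems by (intro measurable_compose[OF measurable_sgd_x_history[OF gf] borel_measurable_continuous_onI[OF gF]]) auto
  moreover have "(\<lambda>v. A *v v) \<in> borel_measurable borel"
    by (intro borel_measurable_continuous_onI linear_continuous_on matrix_vector_mul_bounded_linear)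
  ultimately show ?case using Suc by (simp add: sgd_xi_def)
qed

text \<open>Assumption 1 enters only through the coercivity and linear growth of \<open>\<nabla>F\<close> about \<open>x*\<close>
  and of its derivative \<open>A\<close>; a single constant \<open>L \<ge> \<mu>\<close> bounds both growths.\<close>

locale sgd_linearization = M: prob_space M + P: prob_space P
  for M :: "'w measure" and P :: "'z measure" +
  fixes \<zeta> :: "nat \<Rightarrow> 'w \<Rightarrow> 'z" and gf :: "real^'n \<Rightarrow> 'z \<Rightarrow> real^'n" and gF :: "real^'n \<Rightarrow> real^'n"
    and xstar :: "real^'n" and A :: "real^'n^'n" and \<mu> L \<eta> \<alpha> \<sigma> :: real
  assumes indep: "M.indep_vars (\<lambda>_. P) \<zeta> {1..}"
    and distr_sample: "\<And>n. 1 \<le> n \<Longrightarrow> distr M P (\<zeta> n) = P"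
    and step_params: "0 < \<eta>" "0 < \<alpha>" "\<alpha> < 1"
    and gf_measurable: "(\<lambda>(x, z). gf x z) \<in> borel_measurable (borel \<Otimes>\<^sub>M P)"
    and gF_continuous: "continuous_on UNIV gF"
    and unbiased: "\<And>x. integrable P (gf x)" "\<And>x. (\<integral>z. gf x z \<partial>P) = gF x"
    and fourth_moment: "\<And>x. (\<integral>\<^sup>+ z. ennreal (norm (gF x - gf x z) ^ 4) \<partial>P) \<le> ennreal (\<sigma> * (1 + norm (x - xstar) ^ 4))"
    and \<sigma>_nonneg: "0 \<le> \<sigma>"
    and \<mu>: "0 < \<mu>" "\<mu> \<le> L"
    and gradient_coercive: "\<And>x. \<mu> * (norm (x - xstar))\<^sup>2 \<le> inner (x - xstar) (gF x)"
    and gradient_growth: "\<And>x. norm (gF x) \<le> L * norm (x - xstar)"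
    and A_coercive: "\<And>v. \<mu> * (norm v)\<^sup>2 \<le> inner v (A *v v)"
    and A_bounded: "\<And>v. norm (A *v v) \<le> L * norm v"
begin

abbreviation x_seq :: "real^'n \<Rightarrow> nat \<Rightarrow> 'w \<Rightarrow> real^'n" where
  "x_seq x0 \<equiv> sgd_x gf \<eta> \<alpha> x0 \<zeta>"

abbreviation U_seq :: "real^'n \<Rightarrow> real^'n \<Rightarrow> nat \<Rightarrow> 'w \<Rightarrow> real^'n" where
  "U_seq x0 u0 \<equiv> sgd_U gF gf A \<eta> \<alpha> x0 u0 \<zeta>"

definition history :: "nat \<Rightarrow> 'w \<Rightarrow> nat \<Rightarrow> 'z" where
  "history k \<omega> = restrict (\<lambda>i. \<zeta> i \<omega>) {1..<Suc k}"

definition noise_const :: real where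
  "noise_const = (1 + \<sigma>) / 2"

definition mean_sq_dist :: "real^'n \<Rightarrow> nat \<Rightarrow> ennreal" where
  "mean_sq_dist x0 k = (\<integral>\<^sup>+ \<omega>. ennreal ((norm (x_seq x0 k \<omega> - xstar))\<^sup>2) \<partial>M)"

definition mean_sq_U :: "real^'n \<Rightarrow> real^'n \<Rightarrow> nat \<Rightarrow> ennreal" where
  "mean_sq_U x0 u0 k = (\<integral>\<^sup>+ \<omega>. ennreal ((norm (U_seq x0 u0 k \<omega>))\<^sup>2) \<partial>M)"

lemma noise_const_nonneg: "0 \<le> noise_const"
  using \<sigma>_nonneg by (simp add: noise_const_def)

lemma history_measurable: "history k \<in> measurable M (\<Pi>\<^sub>M j\<in>{1..<Suc k}. P)"
  unfolding history_def using indep by (intro measurable_restrict) (auto simp: M.indep_vars_def)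

lemma sgd_x_history: "sgd_x gf \<eta> \<alpha> x0 \<zeta> k \<omega> = sgd_x gf \<eta> \<alpha> x0 (\<lambda>j h. h j) k (history k \<omega>)"
  unfolding history_def by (rule sgd_x_cong) auto

lemma sgd_U_history:
  "sgd_U gF gf A \<eta> \<alpha> x0 u0 \<zeta> k \<omega> = sgd_U gF gf A \<eta> \<alpha> x0 u0 (\<lambda>j h. h j) k (history k \<omega>)"
  unfolding history_def by (rule sgd_U_cong) auto

lemma sgd_x_measurable: "(\<lambda>\<omega>. sgd_x gf \<eta> \<alpha> x0 \<zeta> k \<omega>) \<in> borel_measurable M"
  unfolding sgd_x_history
  by (rule measurable_compose[OF history_measurable measurable_sgd_x_history[OF gf_measurable]]) simp

lemma sgd_U_measurable: "(\<lambda>\<omega>. sgd_U gF gf A \<eta> \<alpha> x0 u0 \<zeta> k \<omega>) \<in> borel_measurable M"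
  unfolding sgd_U_history
  by (rule measurable_compose[OF history_measurable measurable_sgd_U_history[OF gf_measurable gF_continuous]]) simp

lemma nn_integral_history_next:
  assumes h: "h \<in> borel_measurable ((\<Pi>\<^sub>M j\<in>{1..<Suc k}. P) \<Otimes>\<^sub>M P)"
  shows "(\<integral>\<^sup>+ \<omega>. h (history k \<omega>, \<zeta> (Suc k) \<omega>) \<partial>M) = (\<integral>\<^sup>+ \<omega>. \<integral>\<^sup>+ z. h (history k \<omega>, z) \<partial>P \<partial>M)"
proof -
  define next_sample where "next_sample \<omega> = restrict (\<lambda>i. \<zeta> i \<omega>) {Suc k}" for \<omega>
  have indep_next: "M.indep_var (\<Pi>\<^sub>M j\<in>{1..<Suc k}. P) (history k) (\<Pi>\<^sub>M j\<in>{Suc k}. P) next_sample"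
    unfolding history_def next_sample_def by (rule M.indep_var_restrict[OF indep]) auto
  have "(\<lambda>(p, w). (p, w (Suc k))) \<in> measurable ((\<Pi>\<^sub>M j\<in>{1..<Suc k}. P) \<Otimes>\<^sub>M (\<Pi>\<^sub>M j\<in>{Suc k}. P))
      ((\<Pi>\<^sub>M j\<in>{1..<Suc k}. P) \<Otimes>\<^sub>M P)"
    by measurable
  from measurable_compose[OF this h]
  have h': "(\<lambda>(p, w). h (p, w (Suc k))) \<in> borel_measurable ((\<Pi>\<^sub>M j\<in>{1..<Suc k}. P) \<Otimes>\<^sub>M (\<Pi>\<^sub>M j\<in>{Suc k}. P))"
    by (simp add: case_prod_beta')
  have \<zeta>: "\<zeta> (Suc k) \<in> measurable M P" using indep by (simp add: M.indep_vars_def)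
  have "(\<integral>\<^sup>+ \<omega>'. h (history k \<omega>, \<zeta> (Suc k) \<omega>') \<partial>M) = (\<integral>\<^sup>+ z. h (history k \<omega>, z) \<partial>P)"
    if "\<omega> \<in> space M" for \<omega>
  proof -
    have "(\<lambda>z. h (history k \<omega>, z)) \<in> borel_measurable P"
      by (rule measurable_compose_Pair1[OF measurable_space[OF history_measurable that] h])
    then show ?thesis using nn_integral_distr[OF \<zeta>] distr_sample[of "Suc k"] by simp
  qed
  then show ?thesis
    using M.nn_integral_indep_var[OF indep_next h'] by (simp add: next_sample_def cong: nn_integral_cong)
qed

lemma noise_second_moment:
  "(\<integral>\<^sup>+ z. ennreal ((norm (w + c *\<^sub>R (gF x - gf x z)))\<^sup>2) \<partial>P)
    \<le> ennreal ((norm w)\<^sup>2 + c\<^sup>2 * (noise_const * (1 + (norm (x - xstar))\<^sup>2)))"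
proof -
  define t where "t = 1 + (norm (x - xstar))\<^sup>2"
  have t: "0 < t" unfolding t_def by (simp add: add_pos_nonneg)
  have int: "integrable P (\<lambda>z. gF x - gf x z)" using unbiased by simp
  have mean: "P.expectation (\<lambda>z. gF x - gf x z) = 0" using unbiased by (simp add: P.prob_space)
  have "1 + norm (x - xstar) ^ 4 \<le> t\<^sup>2"
    unfolding t_def by (simp add: power2_eq_square power4_eq_xxxx algebra_simps)
  then have "\<sigma> * (1 + norm (x - xstar) ^ 4) \<le> \<sigma> * t\<^sup>2"
    using \<sigma>_nonneg by (rule mult_left_mono)
  then have "(\<integral>\<^sup>+ z. ennreal (norm (gF x - gf x z) ^ 4) \<partial>P) \<le> ennreal (\<sigma> * t\<^sup>2)"
    using fourth_moment[of x] by (meson ennreal_leI order_trans)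
  note second = P.second_moment_le_of_fourth_moment[OF borel_measurable_integrable[OF int] this t \<sigma>_nonneg]
  have "(\<integral>\<^sup>+ z. ennreal ((norm (w + c *\<^sub>R (gF x - gf x z)))\<^sup>2) \<partial>P)
      = ennreal ((norm w)\<^sup>2 + c\<^sup>2 * P.expectation (\<lambda>z. (norm (gF x - gf x z))\<^sup>2))"
    by (rule P.nn_integral_norm_add_centered[OF int mean second(1)])
  also have "\<dots> \<le> ennreal ((norm w)\<^sup>2 + c\<^sup>2 * (noise_const * t))"
    using second(2) by (intro ennreal_leI add_left_mono mult_left_mono) (auto simp: noise_const_def)
  finally show ?thesis unfolding t_def .
qed

lemma nn_integral_noisy_step:
  fixes \<Phi> :: "(real^'n) \<times> (real^'n) \<Rightarrow> real^'n"
  assumes \<Phi>: "\<Phi> \<in> borel_measurable (borel \<Otimes>\<^sub>M borel)"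
  shows "(\<integral>\<^sup>+ \<omega>. ennreal ((norm (\<Phi> (U_seq x0 u0 k \<omega>, x_seq x0 k \<omega>)
            + c *\<^sub>R (gF (x_seq x0 k \<omega>) - gf (x_seq x0 k \<omega>) (\<zeta> (Suc k) \<omega>))))\<^sup>2) \<partial>M)
    \<le> (\<integral>\<^sup>+ \<omega>. ennreal ((norm (\<Phi> (U_seq x0 u0 k \<omega>, x_seq x0 k \<omega>)))\<^sup>2
            + c\<^sup>2 * (noise_const * (1 + (norm (x_seq x0 k \<omega> - xstar))\<^sup>2))) \<partial>M)"
proof -
  define g where "g h = (sgd_U gF gf A \<eta> \<alpha> x0 u0 (\<lambda>j h. h j) k h, sgd_x gf \<eta> \<alpha> x0 (\<lambda>j h. h j) k h)" for h
  define H where "H q = ennreal ((norm (\<Phi> (g (fst q))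
      + c *\<^sub>R (gF (snd (g (fst q))) - gf (snd (g (fst q))) (snd q))))\<^sup>2)" for q
  have g_history: "g (history k \<omega>) = (U_seq x0 u0 k \<omega>, x_seq x0 k \<omega>)" for \<omega>
    unfolding g_def by (simp add: sgd_x_history sgd_U_history)
  have "g \<in> measurable (\<Pi>\<^sub>M j\<in>{1..<Suc k}. P) (borel \<Otimes>\<^sub>M borel)"
    unfolding g_def using measurable_sgd_U_history[OF gf_measurable gF_continuous]
      measurable_sgd_x_history[OF gf_measurable] by (intro measurable_Pair) auto
  then have g: "(\<lambda>q. g (fst q)) \<in> measurable ((\<Pi>\<^sub>M j\<in>{1..<Suc k}. P) \<Otimes>\<^sub>M P) (borel \<Otimes>\<^sub>M borel)"
    by (rule measurable_compose[OF measurable_fst])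
  have x: "(\<lambda>q. snd (g (fst q))) \<in> borel_measurable ((\<Pi>\<^sub>M j\<in>{1..<Suc k}. P) \<Otimes>\<^sub>M P)"
    using g by measurable
  have "(\<lambda>q. gf (snd (g (fst q))) (snd q)) \<in> borel_measurable ((\<Pi>\<^sub>M j\<in>{1..<Suc k}. P) \<Otimes>\<^sub>M P)"
    using measurable_compose[OF measurable_Pair[OF x measurable_snd] gf_measurable] by simp
  then have H: "H \<in> borel_measurable ((\<Pi>\<^sub>M j\<in>{1..<Suc k}. P) \<Otimes>\<^sub>M P)"
    unfolding H_def
    using measurable_compose[OF g \<Phi>] measurable_compose[OF x borel_measurable_continuous_onI[OF gF_continuous]]
    by measurable
  have "(\<integral>\<^sup>+ \<omega>. ennreal ((norm (\<Phi> (U_seq x0 u0 k \<omega>, x_seq x0 k \<omega>)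
            + c *\<^sub>R (gF (x_seq x0 k \<omega>) - gf (x_seq x0 k \<omega>) (\<zeta> (Suc k) \<omega>))))\<^sup>2) \<partial>M)
      = (\<integral>\<^sup>+ \<omega>. H (history k \<omega>, \<zeta> (Suc k) \<omega>) \<partial>M)"
    by (simp add: H_def g_history)
  also have "\<dots> = (\<integral>\<^sup>+ \<omega>. \<integral>\<^sup>+ z. H (history k \<omega>, z) \<partial>P \<partial>M)"
    by (rule nn_integral_history_next[OF H])
  also have "\<dots> \<le> (\<integral>\<^sup>+ \<omega>. ennreal ((norm (\<Phi> (U_seq x0 u0 k \<omega>, x_seq x0 k \<omega>)))\<^sup>2
            + c\<^sup>2 * (noise_const * (1 + (norm (x_seq x0 k \<omega> - xstar))\<^sup>2))) \<partial>M)"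
    unfolding H_def g_history fst_conv snd_conv by (intro nn_integral_mono noise_second_moment)
  finally show ?thesis .
qed

lemma mean_sq_dist_step:
  fixes k :: nat
  defines "s \<equiv> stepsize \<eta> \<alpha> (Suc k)"
  shows "mean_sq_dist x0 (Suc k)
    \<le> ennreal (1 - 2 * s * \<mu> + s\<^sup>2 * (L\<^sup>2 + noise_const)) * mean_sq_dist x0 k + ennreal (s\<^sup>2 * noise_const)"
proof -
  define \<Phi> where "\<Phi> p = snd p - xstar - s *\<^sub>R gF (snd p)" for p :: "(real^'n) \<times> (real^'n)"
  have \<Phi>: "\<Phi> \<in> borel_measurable (borel \<Otimes>\<^sub>M borel)"
    unfolding \<Phi>_def using borel_measurable_continuous_onI[OF gF_continuous] by measurable
  have s: "0 \<le> s" using stepsize_pos[OF step_params(1), of "Suc k" \<alpha>] by (simp add: s_def)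
  have contract: "(norm (\<Phi> (u, x)))\<^sup>2 \<le> (1 - 2 * s * \<mu> + s\<^sup>2 * L\<^sup>2) * (norm (x - xstar))\<^sup>2" for u x
    unfolding \<Phi>_def using norm_diff_scaleR_power2_le[OF gradient_coercive gradient_growth s] by simp
  have dist: "(\<lambda>\<omega>. (norm (x_seq x0 k \<omega> - xstar))\<^sup>2) \<in> borel_measurable M"
    using sgd_x_measurable by measurable
  have "mean_sq_dist x0 (Suc k) = (\<integral>\<^sup>+ \<omega>. ennreal ((norm (\<Phi> (U_seq x0 u0 k \<omega>, x_seq x0 k \<omega>)
            + s *\<^sub>R (gF (x_seq x0 k \<omega>) - gf (x_seq x0 k \<omega>) (\<zeta> (Suc k) \<omega>))))\<^sup>2) \<partial>M)"
    unfolding mean_sq_dist_def \<Phi>_def s_def stepsize_def by (simp add: algebra_simps)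
  also have "\<dots> \<le> (\<integral>\<^sup>+ \<omega>. ennreal ((norm (\<Phi> (U_seq x0 u0 k \<omega>, x_seq x0 k \<omega>)))\<^sup>2
            + s\<^sup>2 * (noise_const * (1 + (norm (x_seq x0 k \<omega> - xstar))\<^sup>2))) \<partial>M)"
    by (rule nn_integral_noisy_step[OF \<Phi>])
  also have "\<dots> \<le> (\<integral>\<^sup>+ \<omega>. ennreal ((1 - 2 * s * \<mu> + s\<^sup>2 * (L\<^sup>2 + noise_const)) * (norm (x_seq x0 k \<omega> - xstar))\<^sup>2
            + 0 * (norm (x_seq x0 k \<omega> - xstar))\<^sup>2 + s\<^sup>2 * noise_const) \<partial>M)"
    using contract[of "U_seq x0 u0 k _" "x_seq x0 k _"] by (intro nn_integral_mono ennreal_leI) (simp add: algebra_simps)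
  also have "\<dots> = ennreal (1 - 2 * s * \<mu> + s\<^sup>2 * (L\<^sup>2 + noise_const)) * mean_sq_dist x0 k + ennreal (s\<^sup>2 * noise_const)"
    unfolding mean_sq_dist_def using dist \<mu> noise_const_nonneg
    by (subst M.nn_integral_lincomb) (auto intro!: contraction_factor_nonneg add_increasing2 power_mono)
  finally show ?thesis .
qed

lemma mean_sq_U_step:
  fixes k :: nat
  defines "s \<equiv> stepsize \<eta> \<alpha> (Suc k)"
  shows "mean_sq_U x0 u0 (Suc k)
    \<le> ennreal (1 - 2 * s * \<mu> + s\<^sup>2 * L\<^sup>2) * mean_sq_U x0 u0 k
      + ennreal (s\<^sup>2 * noise_const) * mean_sq_dist x0 k + ennreal (s\<^sup>2 * noise_const)"
proof -
  define \<Phi> where "\<Phi> p = fst p - s *\<^sub>R (A *v fst p)" for p :: "(real^'n) \<times> (real^'n)"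
  have "(\<lambda>v. A *v v) \<in> borel_measurable borel"
    by (intro borel_measurable_continuous_onI linear_continuous_on matrix_vector_mul_bounded_linear)
  then have \<Phi>: "\<Phi> \<in> borel_measurable (borel \<Otimes>\<^sub>M borel)"
    unfolding \<Phi>_def by measurable
  have s: "0 \<le> s" using stepsize_pos[OF step_params(1), of "Suc k" \<alpha>] by (simp add: s_def)
  have contract: "(norm (\<Phi> (u, x)))\<^sup>2 \<le> (1 - 2 * s * \<mu> + s\<^sup>2 * L\<^sup>2) * (norm u)\<^sup>2" for u x
    unfolding \<Phi>_def using norm_diff_scaleR_power2_le[OF A_coercive A_bounded s] by simp
  have dist: "(\<lambda>\<omega>. (norm (x_seq x0 k \<omega> - xstar))\<^sup>2) \<in> borel_measurable M"
    using sgd_x_measurable by measurable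
  have U: "(\<lambda>\<omega>. (norm (U_seq x0 u0 k \<omega>))\<^sup>2) \<in> borel_measurable M"
    using sgd_U_measurable by measurable
  have "mean_sq_U x0 u0 (Suc k) = (\<integral>\<^sup>+ \<omega>. ennreal ((norm (\<Phi> (U_seq x0 u0 k \<omega>, x_seq x0 k \<omega>)
            + s *\<^sub>R (gF (x_seq x0 k \<omega>) - gf (x_seq x0 k \<omega>) (\<zeta> (Suc k) \<omega>))))\<^sup>2) \<partial>M)"
    unfolding mean_sq_U_def \<Phi>_def s_def stepsize_def by (simp add: sgd_xi_def)
  also have "\<dots> \<le> (\<integral>\<^sup>+ \<omega>. ennreal ((norm (\<Phi> (U_seq x0 u0 k \<omega>, x_seq x0 k \<omega>)))\<^sup>2
            + s\<^sup>2 * (noise_const * (1 + (norm (x_seq x0 k \<omega> - xstar))\<^sup>2))) \<partial>M)"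
    by (rule nn_integral_noisy_step[OF \<Phi>])
  also have "\<dots> \<le> (\<integral>\<^sup>+ \<omega>. ennreal ((1 - 2 * s * \<mu> + s\<^sup>2 * L\<^sup>2) * (norm (U_seq x0 u0 k \<omega>))\<^sup>2
            + s\<^sup>2 * noise_const * (norm (x_seq x0 k \<omega> - xstar))\<^sup>2 + s\<^sup>2 * noise_const) \<partial>M)"
    using contract[of "U_seq x0 u0 k _" "x_seq x0 k _"] by (intro nn_integral_mono ennreal_leI) (simp add: algebra_simps)
  also have "\<dots> = ennreal (1 - 2 * s * \<mu> + s\<^sup>2 * L\<^sup>2) * mean_sq_U x0 u0 k
      + ennreal (s\<^sup>2 * noise_const) * mean_sq_dist x0 k + ennreal (s\<^sup>2 * noise_const)"
    unfolding mean_sq_U_def mean_sq_dist_def using U dist \<mu> noise_const_nonneg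
    by (subst M.nn_integral_lincomb) (auto intro!: contraction_factor_nonneg power_mono)
  finally show ?thesis .
qed

lemma mean_sq_U_step_bounded:
  fixes k :: nat
  defines "s \<equiv> stepsize \<eta> \<alpha> (Suc k)"
  assumes "mean_sq_dist x0 k \<le> ennreal D" and "0 \<le> D"
  shows "mean_sq_U x0 u0 (Suc k)
    \<le> ennreal (1 - 2 * s * \<mu> + s\<^sup>2 * L\<^sup>2) * mean_sq_U x0 u0 k + ennreal (s\<^sup>2 * (noise_const * (D + 1)))"
proof -
  have "ennreal (s\<^sup>2 * noise_const) * mean_sq_dist x0 k + ennreal (s\<^sup>2 * noise_const)
      \<le> ennreal (s\<^sup>2 * noise_const) * ennreal D + ennreal (s\<^sup>2 * noise_const)"
    using assms(2) by (intro add_right_mono mult_left_mono) auto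
  also have "\<dots> = ennreal (s\<^sup>2 * noise_const * D + s\<^sup>2 * noise_const)"
    using assms(3) noise_const_nonneg by (simp add: ennreal_plus ennreal_mult)
  also have "\<dots> = ennreal (s\<^sup>2 * (noise_const * (D + 1)))"
    by (simp add: algebra_simps)
  finally show ?thesis
    using mean_sq_U_step[of x0 u0 k, folded s_def] by (simp only: add.assoc) (rule order_trans[OF _ add_left_mono])
qed

lemma mean_sq_dist_bounded:
  obtains B where "0 \<le> B" and "\<And>x0 k. mean_sq_dist x0 k \<le> ennreal (B * (1 + (norm (x0 - xstar))\<^sup>2))"
proof -
  define K where "K = noise_const"
  have K: "0 \<le> K" unfolding K_def by (rule noise_const_nonneg)
  have "\<mu>\<^sup>2 \<le> L\<^sup>2" using \<mu> by (intro power_mono) auto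
  then obtain C where "0 \<le> C" and rate: "\<And>E v b n. 0 \<le> v \<Longrightarrow> 0 \<le> b \<Longrightarrow> E 0 = ennreal v \<Longrightarrow>
      (\<And>k. E (Suc k) \<le> ennreal (1 - 2 * stepsize \<eta> \<alpha> (Suc k) * \<mu> + (stepsize \<eta> \<alpha> (Suc k))\<^sup>2 * (L\<^sup>2 + K)) * E k
                 + ennreal ((stepsize \<eta> \<alpha> (Suc k))\<^sup>2 * b)) \<Longrightarrow>
      1 \<le> n \<Longrightarrow> E n \<le> ennreal (C * real n powr - \<alpha> * (v + b))"
    using ennreal_stepsize_recursion_rate[OF step_params \<mu>(1), of "L\<^sup>2 + K"] K by auto
  show ?thesis
  proof (rule that[of "max C 1 * max K 1"])
    fix x0 k
    define d0 where "d0 = (norm (x0 - xstar))\<^sup>2"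
    have start: "mean_sq_dist x0 0 = ennreal d0"
      by (simp add: mean_sq_dist_def d0_def M.emeasure_space_1)
    have "C * real k powr - \<alpha> \<le> C * 1" if "k \<noteq> 0"
      using that step_params \<open>0 \<le> C\<close>
      by (intro mult_left_mono) (simp_all add: powr_minus inverse_le_1_iff ge_one_powr_ge_zero)
    then have "C * real k powr - \<alpha> * (d0 + K) \<le> max C 1 * (d0 + K)" if "k \<noteq> 0"
      using that K by (intro mult_right_mono) (auto simp: d0_def)
    moreover have "d0 \<le> max C 1 * (d0 + K)"
      using mult_right_mono[of 1 "max C 1" "d0 + K"] K by (simp add: d0_def)
    ultimately have "mean_sq_dist x0 k \<le> ennreal (max C 1 * (d0 + K))"
      using rate[of d0 K "mean_sq_dist x0" k] start K mean_sq_dist_step[of x0, folded K_def]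
      by (cases "k = 0") (auto simp: d0_def intro: order_trans ennreal_leI)
    also have "\<dots> \<le> ennreal (max C 1 * max K 1 * (1 + d0))"
      using mult_right_mono[of 1 "max K 1" d0] K unfolding mult.assoc
      by (intro ennreal_leI mult_left_mono) (auto simp: d0_def algebra_simps)
    finally show "mean_sq_dist x0 k \<le> ennreal (max C 1 * max K 1 * (1 + (norm (x0 - xstar))\<^sup>2))"
      unfolding d0_def .
  qed simp
qed

theorem mean_sq_U_rate:
  "\<exists>C. \<forall>x0 u0 n. 1 \<le> n \<longrightarrow>
    mean_sq_U x0 u0 n \<le> ennreal (C * real n powr - \<alpha> * (1 + (norm u0)\<^sup>2 + (norm (x0 - xstar))\<^sup>2))"
proof -
  define K where "K = noise_const"
  have K: "0 \<le> K" unfolding K_def by (rule noise_const_nonneg)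
  have "\<mu>\<^sup>2 \<le> L\<^sup>2" using \<mu> by (intro power_mono) auto
  then obtain C where C: "0 \<le> C" and rate: "\<And>E v b n. 0 \<le> v \<Longrightarrow> 0 \<le> b \<Longrightarrow> E 0 = ennreal v \<Longrightarrow>
      (\<And>k. E (Suc k) \<le> ennreal (1 - 2 * stepsize \<eta> \<alpha> (Suc k) * \<mu> + (stepsize \<eta> \<alpha> (Suc k))\<^sup>2 * L\<^sup>2) * E k
                 + ennreal ((stepsize \<eta> \<alpha> (Suc k))\<^sup>2 * b)) \<Longrightarrow>
      1 \<le> n \<Longrightarrow> E n \<le> ennreal (C * real n powr - \<alpha> * (v + b))"
    using ennreal_stepsize_recursion_rate[OF step_params \<mu>(1)] by blast
  obtain B where B: "0 \<le> B" "\<And>x0 k. mean_sq_dist x0 k \<le> ennreal (B * (1 + (norm (x0 - xstar))\<^sup>2))"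
    using mean_sq_dist_bounded by blast
  show ?thesis
  proof (intro exI[of _ "C * (1 + K * B + K)"] allI impI)
    fix x0 u0 :: "real^'n" and n :: nat
    assume n: "1 \<le> n"
    define d0 where "d0 = (norm (x0 - xstar))\<^sup>2"
    have start: "mean_sq_U x0 u0 0 = ennreal ((norm u0)\<^sup>2)"
      by (simp add: mean_sq_U_def M.emeasure_space_1)
    have "mean_sq_U x0 u0 n \<le> ennreal (C * real n powr - \<alpha> * ((norm u0)\<^sup>2 + K * (B * (1 + d0) + 1)))"
      by (rule rate[OF _ _ start mean_sq_U_step_bounded[folded K_def] n]) (use B K in \<open>auto simp: d0_def\<close>)
    also have "\<dots> \<le> ennreal (C * real n powr - \<alpha> * ((1 + K * B + K) * (1 + (norm u0)\<^sup>2 + d0)))"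
    proof (intro ennreal_leI mult_left_mono)
      have "(norm u0)\<^sup>2 \<le> (1 + K * B + K) * (norm u0)\<^sup>2"
        using mult_right_mono[of 1 "1 + K * B + K" "(norm u0)\<^sup>2"] K B by simp
      moreover have "K * B * d0 \<le> (1 + K * B + K) * d0"
        using K B by (intro mult_right_mono) (auto simp: d0_def)
      ultimately show "(norm u0)\<^sup>2 + K * (B * (1 + d0) + 1) \<le> (1 + K * B + K) * (1 + (norm u0)\<^sup>2 + d0)"
        by (simp add: algebra_simps)
    qed (use C in simp)
    finally show "mean_sq_U x0 u0 n
        \<le> ennreal (C * (1 + K * B + K) * real n powr - \<alpha> * (1 + (norm u0)\<^sup>2 + (norm (x0 - xstar))\<^sup>2))"
      unfolding d0_def by (simp add: mult_ac)
  qed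
qed

end

theorem lemma8:
  fixes M :: "'w measure" and P :: "'z measure"
    and \<zeta> :: "nat \<Rightarrow> 'w \<Rightarrow> 'z"
    and f :: "real^'n \<Rightarrow> 'z \<Rightarrow> real" and gf :: "real^'n \<Rightarrow> 'z \<Rightarrow> real^'n"
    and F :: "real^'n \<Rightarrow> real" and gF :: "real^'n \<Rightarrow> real^'n"
    and xstar :: "real^'n" and A :: "real^'n^'n"
    and S :: "real^'n^'n" and \<Sigma> :: "real^'n \<Rightarrow> real^'n^'n"
    and \<mu> L\<^sub>F \<eta> \<alpha> \<Sigma>\<^sub>2 \<Sigma>\<^sub>4 :: real and \<kappa> :: nat
  assumes M: "prob_space M" and Pi: "prob_space P"
    and iid_indep: "prob_space.indep_vars M (\<lambda>_. P) \<zeta> {1..}"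
    and iid_distr: "\<forall>n\<ge>1. distr M P (\<zeta> n) = P"
    and step: "\<eta> > 0" "0 < \<alpha>" "\<alpha> < 1"
    \<comment> \<open>the loss, its gradient in x, and F = E f\<close>
    and f_meas: "\<forall>x. f x \<in> borel_measurable P"
    and gf_meas: "(\<lambda>(x, z). gf x z) \<in> borel_measurable (borel \<Otimes>\<^sub>M P)"
    and f_diff: "\<forall>x z. GDERIV (\<lambda>y. f y z) x :> gf x z"
    and F_int: "\<forall>x. integrable P (f x)"
    and F_def: "\<forall>x. F x = (\<integral>z. f x z \<partial>P)"
    \<comment> \<open>Assumption 1\<close>
    and F_grad: "\<forall>x. GDERIV F x :> gF x"
    and gF_cont: "continuous_on UNIV gF"
    and mu_pos: "\<mu> > 0"
    and F_sc: "strongly_convex \<mu> F"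
    and gF_lip: "L\<^sub>F-lipschitz_on UNIV gF"
    and xstar_min: "\<forall>x. F xstar \<le> F x"
    and hessian: "(gF has_derivative (\<lambda>h. A *v h)) (at xstar)"
    \<comment> \<open>Assumption 2 (i)\<close>
    and A2i: "\<forall>x. integrable P (gf x) \<and> (\<integral>z. gf x z \<partial>P) = gF x"
    \<comment> \<open>Assumption 2 (ii)\<close>
    and S_def: "S = (\<integral>z. outer (gf xstar z) \<partial>P)"
    and kappa: "\<kappa> \<in> {1, 2}" and Sigma2_pos: "\<Sigma>\<^sub>2 > 0"
    and A2ii: "\<forall>x. (\<integral>z. outer (gF x - gf x z) \<partial>P) = S + \<Sigma> (x - xstar)"
    and Sigma_norm: "\<forall>\<Delta>. onorm (\<lambda>v. \<Sigma> \<Delta> *v v) \<le> \<Sigma>\<^sub>2 * (norm \<Delta> ^ \<kappa> + norm \<Delta> ^ 2)"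
    and Sigma_trace: "\<forall>\<Delta>. \<bar>trace (\<Sigma> \<Delta>)\<bar> \<le> \<Sigma>\<^sub>2 * (norm \<Delta> ^ \<kappa> + norm \<Delta> ^ 2)"
    \<comment> \<open>Assumption 2 (iii)\<close>
    and A2iii: "\<forall>x. (\<integral>\<^sup>+ z. ennreal (norm (gF x - gf x z) ^ 4) \<partial>P)
                    \<le> ennreal (\<Sigma>\<^sub>4 * (1 + norm (x - xstar) ^ 4))"
  shows "\<exists>C. \<forall>x0 u0 n. n \<ge> 1 \<longrightarrow>
           (\<integral>\<^sup>+ \<omega>. ennreal (norm (sgd_U gF gf A \<eta> \<alpha> x0 u0 \<zeta> n \<omega>) ^ 2) \<partial>M)
             \<le> ennreal (C * real n powr (- \<alpha>) * (1 + norm u0 ^ 2 + norm (x0 - xstar) ^ 2))"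
proof -
  have "gF xstar = 0"
    using F_grad xstar_min by (intro GDERIV_zero_at_min[of F xstar]) auto
  moreover have mono: "\<And>x y. \<mu> * (norm (y - x))\<^sup>2 \<le> inner (y - x) (gF y - gF x)"
    using F_grad by (intro strongly_convex_gradient_monotone[OF F_sc]) auto
  ultimately have coercive: "\<mu> * (norm (x - xstar))\<^sup>2 \<le> inner (x - xstar) (gF x)" for x
    using mono[of x xstar] by simp
  define L where "L = max (max L\<^sub>F (onorm (\<lambda>v. A *v v))) \<mu>"
  have "norm (gF x) \<le> L * norm (x - xstar)" for x
  proof -
    have "norm (gF x) \<le> L\<^sub>F * norm (x - xstar)"
      using gF_lip \<open>gF xstar = 0\<close> unfolding lipschitz_on_def dist_norm by (metis UNIV_I diff_zero)
    also have "\<dots> \<le> L * norm (x - xstar)" unfolding L_def by (intro mult_right_mono) auto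
    finally show ?thesis .
  qed
  moreover have "norm (A *v v) \<le> L * norm v" for v
  proof -
    have "norm (A *v v) \<le> onorm (\<lambda>v. A *v v) * norm v"
      by (rule onorm[OF matrix_vector_mul_bounded_linear])
    also have "\<dots> \<le> L * norm v" unfolding L_def by (intro mult_right_mono) auto
    finally show ?thesis .
  qed
  moreover have "(\<integral>\<^sup>+ z. ennreal (norm (gF x - gf x z) ^ 4) \<partial>P)
      \<le> ennreal (max \<Sigma>\<^sub>4 0 * (1 + norm (x - xstar) ^ 4))" for x
    by (rule order_trans[OF A2iii[rule_format] ennreal_leI[OF mult_right_mono]]) auto
  ultimately interpret sgd_linearization M P \<zeta> gf gF xstar A \<mu> L \<eta> \<alpha> "max \<Sigma>\<^sub>4 0"
    using M Pi iid_indep iid_distr step gf_meas gF_cont A2i mu_pos coercive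
      derivative_coercive_of_strongly_monotone[OF mono hessian]
    by (intro sgd_linearization.intro sgd_linearization_axioms.intro) (simp_all add: L_def)
  show ?thesis using mean_sq_U_rate unfolding mean_sq_U_def .
qed

end
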